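(* For all integers $i,j,k,m\ge0$: if $\omega_i+\omega_j-\omega_m=0$, or $\omega_i-\omega_j+\omega_m=0$, or $-\omega_i+\omega_j+\omega_m=0$, then $\overline{\mathfrak{C}}_{ijm}=0$; and if $\omega_i+\omega_j+\omega_k-\omega_m=0$, or $\omega_i+\omega_j-\omega_k+\omega_m=0$, or $\omega_i-\omega_j+\omega_k+\omega_m=0$, or $-\omega_i+\omega_j+\omega_k+\omega_m=0$, then $\mathfrak{C}_{ijkm}=0$.
   Context: $\omega_n=n+2$. $\mathfrak{e}_n(x)=\mathfrak{N}_nP_n^{(3/2,3/2)}(\cos x)$ with $P_n^{(3/2,3/2)}$ the Jacobi polynomial and $\mathfrak{N}_n=\frac{\sqrt{\omega_n\Gamma(1+n)\Gamma(4+n)}}{2\sqrt2\,\Gamma(5/2+n)}$. $\overline{\mathfrak{C}}_{ijm}=\int_0^\pi\mathfrak{e}_i\mathfrak{e}_j\mathfrak{e}_m\sin^4x\,dx$, $\mathfrak{C}_{ijkm}=\int_0^\pi\mathfrak{e}_i\mathfrak{e}_j\mathfrak{e}_k\mathfrak{e}_m\sin^6x\,dx$. *)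

theory Defs
  imports "HOL-Analysis.Analysis"
begin

definition jacobiP :: "nat \<Rightarrow> real \<Rightarrow> real \<Rightarrow> real \<Rightarrow> real" where
  "jacobiP n a b x =
     (\<Sum>s\<le>n. ((real n + a) gchoose (n - s)) * ((real n + b) gchoose s)
              * ((x - 1) / 2) ^ s * ((x + 1) / 2) ^ (n - s))"

definition omega :: "nat \<Rightarrow> int" where
  "omega n = int n + 2"

definition normN :: "nat \<Rightarrow> real" where
  "normN n = sqrt (real_of_int (omega n) * Gamma (1 + real n) * Gamma (4 + real n))
             / (2 * sqrt 2 * Gamma (5/2 + real n))"

definition ee :: "nat \<Rightarrow> real \<Rightarrow> real" where
  "ee n x = normN n * jacobiP n (3/2) (3/2) (cos x)"

definition Cbar :: "nat \<Rightarrow> nat \<Rightarrow> nat \<Rightarrow> real" where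
  "Cbar i j m = integral {0..pi} (\<lambda>x. ee i x * ee j x * ee m x * sin x ^ 4)"

definition C4 :: "nat \<Rightarrow> nat \<Rightarrow> nat \<Rightarrow> nat \<Rightarrow> real" where
  "C4 i j k m = integral {0..pi} (\<lambda>x. ee i x * ee j x * ee k x * ee m x * sin x ^ 6)"

end

theory Submission
  imports Defs "HOL-Computational_Algebra.Polynomial"
begin

text \<open>The hypotheses on \<open>\<omega>\<close> say that one index exceeds the sum of the others by 2
  (by 4 for the quartic coefficient), e.g. \<open>m = i + j + 2\<close>. Since \<open>e\<^sub>n\<close> is a polynomial of
  degree \<open>n\<close> in \<open>cos x\<close> and \<open>sin\<^sup>6 x = sin\<^sup>4 x (1 - cos\<^sup>2 x)\<close>, the integrand is then \<open>e\<^sub>m\<close>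
  times a polynomial of lower degree in \<open>cos x\<close> against \<open>sin\<^sup>4 x dx\<close>, which is the Jacobi
  weight for the parameters \<open>(3/2, 3/2)\<close> after \<open>t = cos x\<close>; so it vanishes by orthogonality.

  Orthogonality follows from the explicit formula: testing \<open>P\<^sub>n\<close> against \<open>((1 + t)/2)\<^sup>k\<close>
  produces Beta-type moments \<open>\<integral> haversin\<^sup>a havercos\<^sup>b\<close>, and their integration-by-parts
  recurrence turns the resulting sum into an \<open>n\<close>-th finite difference of a polynomial of
  degree \<open>k < n\<close>.\<close>

lemma alternating_binomial_sum_Suc:
  fixes f :: "nat \<Rightarrow> 'a::comm_ring_1"
  shows "(\<Sum>s\<le>Suc n. (-1)^s * of_nat (Suc n choose s) * f s)
       = (\<Sum>s\<le>n. (-1)^s * of_nat (n choose s) * (f s - f (Suc s)))"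
proof -
  have "(\<Sum>s\<le>Suc n. (-1)^s * of_nat (Suc n choose s) * f s)
      = f 0 + (\<Sum>s\<le>n. (-1)^Suc s * of_nat (Suc n choose Suc s) * f (Suc s))"
    by (subst sum.atMost_Suc_shift) simp
  also have "\<dots> = (f 0 + (\<Sum>s\<le>n. (-1)^Suc s * of_nat (n choose Suc s) * f (Suc s)))
            + (\<Sum>s\<le>n. (-1)^Suc s * of_nat (n choose s) * f (Suc s))"
    by (simp only: binomial_Suc_Suc of_nat_add distrib_left distrib_right sum.distrib)
      (simp add: add_ac)
  also have "f 0 + (\<Sum>s\<le>n. (-1)^Suc s * of_nat (n choose Suc s) * f (Suc s))
      = (\<Sum>s\<le>n. (-1)^s * of_nat (n choose s) * f s)"
    using sum.atMost_Suc_shift[of "\<lambda>s. (-1)^s * of_nat (n choose s) * f s" n]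
    by (simp add: binomial_eq_0)
  also have "\<dots> + (\<Sum>s\<le>n. (-1)^Suc s * of_nat (n choose s) * f (Suc s))
      = (\<Sum>s\<le>n. (-1)^s * of_nat (n choose s) * (f s - f (Suc s)))"
    by (simp add: right_diff_distrib sum_subtractf sum_negf)
  finally show ?thesis .
qed

lemma degree_forward_difference_less:
  fixes p :: "'a::idom poly"
  assumes "degree p > 0"
  shows "degree (p \<circ>\<^sub>p [:1, 1:] - p) < degree p"
proof -
  let ?q = "p \<circ>\<^sub>p [:1, 1:] - p"
  have deg: "degree (p \<circ>\<^sub>p [:1, 1:]) = degree p"
    by (simp add: degree_pcompose)
  then have "coeff (p \<circ>\<^sub>p [:1, 1:]) (degree p) = lead_coeff p"
    using lead_coeff_comp[of "[:1, 1:]" p] by simp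
  then have "degree ?q \<le> degree p" and "coeff ?q (degree p) = 0"
    using deg by (auto intro: degree_diff_le)
  moreover have "degree ?q \<noteq> degree p" if "?q \<noteq> 0"
    using that \<open>coeff ?q (degree p) = 0\<close> leading_coeff_0_iff by metis
  ultimately show ?thesis
    using assms by (cases "?q = 0") auto
qed

lemma alternating_binomial_sum_poly_eq_0:
  fixes p :: "'a::idom poly"
  assumes "degree p < n"
  shows "(\<Sum>s\<le>n. (-1)^s * of_nat (n choose s) * poly p (of_nat s)) = 0"
  using assms
proof (induction n arbitrary: p)
  case 0
  then show ?case by simp
next
  case (Suc n)
  let ?q = "p \<circ>\<^sub>p [:1, 1:] - p"
  have "poly p (of_nat s) - poly p (of_nat (Suc s)) = - poly ?q (of_nat s)" for s
    by (simp add: poly_pcompose algebra_simps)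
  then have "(\<Sum>s\<le>Suc n. (-1)^s * of_nat (Suc n choose s) * poly p (of_nat s))
      = - (\<Sum>s\<le>n. (-1)^s * of_nat (n choose s) * poly ?q (of_nat s))"
    by (simp only: alternating_binomial_sum_Suc mult_minus_right sum_negf)
  also have "(\<Sum>s\<le>n. (-1)^s * of_nat (n choose s) * poly ?q (of_nat s)) = 0"
  proof (cases "degree p = 0")
    case True
    then show ?thesis
      by (auto elim!: degree_eq_zeroE)
  next
    case False
    then have "degree ?q < n"
      using degree_forward_difference_less[of p] Suc.prems by simp
    then show ?thesis
      by (rule Suc.IH)
  qed
  finally show ?case
    by simp
qed

text \<open>With \<open>t = cos x\<close> these are the variables \<open>(1 - t)/2\<close> and \<open>(1 + t)/2\<close> of the explicit
  Jacobi formula, and \<open>haversin\<^sup>p havercos\<^sup>q dx\<close> is, up to a constant, the Jacobi weight for the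
  parameters \<open>(p - 1/2, q - 1/2)\<close>.\<close>

definition haversin :: "real \<Rightarrow> real" where
  "haversin x = (1 - cos x) / 2"

definition havercos :: "real \<Rightarrow> real" where
  "havercos x = (1 + cos x) / 2"

definition hav_moment :: "nat \<Rightarrow> nat \<Rightarrow> real" where
  "hav_moment a b = integral {0..pi} (\<lambda>x. haversin x ^ a * havercos x ^ b)"

lemma sin_squared_eq_haversin_havercos: "sin x ^ 2 = 4 * haversin x * havercos x"
  unfolding haversin_def havercos_def by (subst sin_squared_eq) (simp add: power2_eq_square field_simps)

lemma cos_eq_havercos_minus_haversin: "cos x = havercos x - haversin x"
  unfolding haversin_def havercos_def by (simp add: field_simps)

lemma continuous_on_haversin [continuous_intros]: "continuous_on S haversin"
  unfolding haversin_def by (intro continuous_intros) auto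

lemma continuous_on_havercos [continuous_intros]: "continuous_on S havercos"
  unfolding havercos_def by (intro continuous_intros) auto

lemma has_real_derivative_haversin [derivative_intros]:
  "(haversin has_real_derivative sin x / 2) (at x)"
  unfolding haversin_def by (auto intro!: derivative_eq_intros)

lemma has_real_derivative_havercos [derivative_intros]:
  "(havercos has_real_derivative - sin x / 2) (at x)"
  unfolding havercos_def by (auto intro!: derivative_eq_intros)

lemma has_real_derivative_hav_power_sin:
  "((\<lambda>x. haversin x ^ a * havercos x ^ b * sin x) has_real_derivative
      (2 * real a + 1) * (haversin x ^ a * havercos x ^ Suc b)
    - (2 * real b + 1) * (haversin x ^ Suc a * havercos x ^ b)) (at x)"
proof -
  define w v where "w = haversin x" and "v = havercos x"
  have "((\<lambda>x. haversin x ^ a * havercos x ^ b * sin x) has_real_derivative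
      real a * w ^ (a - 1) * v ^ b * (sin x * sin x) / 2
    - real b * w ^ a * v ^ (b - 1) * (sin x * sin x) / 2 + w ^ a * v ^ b * cos x) (at x)"
    unfolding w_def v_def by (auto intro!: derivative_eq_intros simp: algebra_simps)
  moreover have sin_sq: "sin x * sin x = 4 * w * v" and cos_eq: "cos x = v - w"
    using sin_squared_eq_haversin_havercos[of x] cos_eq_havercos_minus_haversin[of x]
    by (simp_all add: w_def v_def power2_eq_square)
  moreover have "real a * w ^ (a - 1) * v ^ b * (sin x * sin x) / 2
    - real b * w ^ a * v ^ (b - 1) * (sin x * sin x) / 2 + w ^ a * v ^ b * cos x
    = (2 * real a + 1) * (w ^ a * v ^ Suc b) - (2 * real b + 1) * (w ^ Suc a * v ^ b)"
    unfolding sin_sq cos_eq by (cases a; cases b) (simp_all add: field_simps)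
  ultimately show ?thesis
    unfolding w_def v_def by simp
qed

lemma hav_moment_recurrence:
  "(2 * real a + 1) * hav_moment a (Suc b) = (2 * real b + 1) * hav_moment (Suc a) b"
proof -
  define F where "F x = haversin x ^ a * havercos x ^ b * sin x" for x
  define G where "G x = (2 * real a + 1) * (haversin x ^ a * havercos x ^ Suc b)
      - (2 * real b + 1) * (haversin x ^ Suc a * havercos x ^ b)" for x
  have "(G has_integral F pi - F 0) {0..pi}"
  proof (rule fundamental_theorem_of_calculus)
    fix x :: real
    show "(F has_vector_derivative G x) (at x within {0..pi})"
      unfolding F_def G_def has_real_derivative_iff_has_vector_derivative[symmetric]
      by (rule has_field_derivative_at_within[OF has_real_derivative_hav_power_sin])
  qed simp
  then have "(G has_integral 0) {0..pi}"
    by (simp add: F_def)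
  moreover have "(G has_integral
      (2 * real a + 1) * hav_moment a (Suc b) - (2 * real b + 1) * hav_moment (Suc a) b) {0..pi}"
    unfolding hav_moment_def G_def
    by (intro has_integral_diff has_integral_mult_right integrable_integral
        integrable_continuous_interval continuous_intros)
  ultimately have "0 = (2 * real a + 1) * hav_moment a (Suc b) - (2 * real b + 1) * hav_moment (Suc a) b"
    by (rule has_integral_unique)
  then show ?thesis
    by simp
qed

lemma hav_moment_shift:
  "hav_moment (s + p) (t + q) * pochhammer (real (t + q) + 1/2) s
     = hav_moment p (s + t + q) * pochhammer (real p + 1/2) s"
proof (induction s arbitrary: t)
  case 0
  then show ?case by simp
next
  case (Suc s)
  have "hav_moment (Suc s + p) (t + q) * pochhammer (real (t + q) + 1/2) (Suc s)
      = (2 * real (t + q) + 1) * hav_moment (Suc (s + p)) (t + q)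
          * pochhammer (real (Suc t + q) + 1/2) s / 2"
    by (simp add: pochhammer_rec field_simps)
  also have "\<dots> = (2 * real (s + p) + 1) * hav_moment (s + p) (Suc t + q)
          * pochhammer (real (Suc t + q) + 1/2) s / 2"
    by (simp only: hav_moment_recurrence[symmetric] add_Suc)
  also have "\<dots> = (2 * real (s + p) + 1) * hav_moment p (s + Suc t + q)
          * pochhammer (real p + 1/2) s / 2"
    by (simp only: mult.assoc Suc.IH[of "Suc t"])
  also have "\<dots> = hav_moment p (Suc s + t + q) * pochhammer (real p + 1/2) (Suc s)"
    by (simp add: pochhammer_Suc field_simps)
  finally show ?case .
qed

lemma jacobi_moment_term:
  "((real (s + d) + (real p - 1/2)) gchoose d) * ((real (s + d) + (real q - 1/2)) gchoose s)
      * hav_moment (s + p) (d + k + q) * pochhammer (real (s + d) + real q + 1/2) k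
   = pochhammer (real p + 1/2) (s + d) * hav_moment p (s + d + k + q) / (fact s * fact d)
      * pochhammer (real d + real q + 1/2) k"
proof -
  have binom_p: "(real (s + d) + (real p - 1/2)) gchoose d = pochhammer (real s + real p + 1/2) d / fact d"
    by (simp add: gbinomial_pochhammer' algebra_simps)
  have binom_q: "(real (s + d) + (real q - 1/2)) gchoose s = pochhammer (real d + real q + 1/2) s / fact s"
    by (simp add: gbinomial_pochhammer' algebra_simps)
  have poch_q: "pochhammer (real d + real q + 1/2) s * pochhammer (real (s + d) + real q + 1/2) k
      = pochhammer (real d + real q + 1/2) k * pochhammer (real (d + k + q) + 1/2) s"
    using pochhammer_product'[of "real d + real q + 1/2" s k] pochhammer_product'[of "real d + real q + 1/2" k s]
    by (simp add: algebra_simps)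
  have poch_p: "pochhammer (real p + 1/2) s * pochhammer (real s + real p + 1/2) d
      = pochhammer (real p + 1/2) (s + d)"
    using pochhammer_product'[of "real p + 1/2" s d] by (simp add: algebra_simps)
  have "((real (s + d) + (real p - 1/2)) gchoose d) * ((real (s + d) + (real q - 1/2)) gchoose s)
      * hav_moment (s + p) (d + k + q) * pochhammer (real (s + d) + real q + 1/2) k
    = pochhammer (real s + real p + 1/2) d / (fact s * fact d) * pochhammer (real d + real q + 1/2) k
      * (hav_moment (s + p) ((d + k) + q) * pochhammer (real ((d + k) + q) + 1/2) s)"
  proof -
    have "((real (s + d) + (real p - 1/2)) gchoose d) * ((real (s + d) + (real q - 1/2)) gchoose s)
        * hav_moment (s + p) (d + k + q) * pochhammer (real (s + d) + real q + 1/2) k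
      = pochhammer (real s + real p + 1/2) d / (fact s * fact d) * hav_moment (s + p) (d + k + q)
        * (pochhammer (real d + real q + 1/2) s * pochhammer (real (s + d) + real q + 1/2) k)"
      unfolding binom_p binom_q by (simp add: field_simps)
    then show ?thesis
      unfolding poch_q by (simp add: algebra_simps)
  qed
  also have "\<dots> = pochhammer (real s + real p + 1/2) d / (fact s * fact d) * pochhammer (real d + real q + 1/2) k
      * (hav_moment p (s + (d + k) + q) * pochhammer (real p + 1/2) s)"
    by (simp only: hav_moment_shift)
  also have "\<dots> = pochhammer (real p + 1/2) (s + d) * hav_moment p (s + d + k + q) / (fact s * fact d)
      * pochhammer (real d + real q + 1/2) k"
    by (simp add: poch_p[symmetric] add.assoc)
  finally show ?thesis .
qed

lemma ex_poly_pochhammer_minus: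
  "\<exists>r :: 'a::comm_ring_1 poly. degree r \<le> k \<and> (\<forall>x. poly r x = pochhammer (c - x) k)"
proof (intro exI conjI allI)
  let ?r = "\<Prod>i<k. [:c + of_nat i, -1:]"
  have "degree ?r \<le> (\<Sum>i<k. degree [:c + of_nat i, -1 :: 'a:])"
    by (rule order.trans[OF degree_prod_sum_le]) (simp_all add: o_def)
  also have "\<dots> \<le> k"
    by (rule order.trans[OF sum_mono[of _ _ "\<lambda>_. 1"]]) simp_all
  finally show "degree ?r \<le> k" .
  show "poly ?r x = pochhammer (c - x) k" for x
    by (simp add: pochhammer_prod poly_prod atLeast0LessThan algebra_simps)
qed

lemma jacobi_moment_sum_eq_0:
  assumes "k < n"
  shows "(\<Sum>s\<le>n. ((real n + (real p - 1/2)) gchoose (n - s)) * ((real n + (real q - 1/2)) gchoose s)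
            * (-1)^s * hav_moment (s + p) (n - s + k + q)) = 0"
proof -
  define P where "P = pochhammer (real n + real q + 1/2) k"
  define C where "C = pochhammer (real p + 1/2) n * hav_moment p (n + k + q) / fact n"
  \<comment> \<open>After multiplication by \<open>P\<close>, the summands are \<open>(-1)\<^sup>s (n choose s)\<close> times a polynomial
    of degree \<open>k\<close> in \<open>s\<close>.\<close>
  obtain r :: "real poly" where deg_r: "degree r \<le> k"
    and poly_r: "\<And>x. poly r x = pochhammer (real n + real q + 1/2 - x) k"
    using ex_poly_pochhammer_minus by blast
  have "((real n + (real p - 1/2)) gchoose (n - s)) * ((real n + (real q - 1/2)) gchoose s)
          * (-1)^s * hav_moment (s + p) (n - s + k + q) * P
      = C * ((-1)^s * of_nat (n choose s) * poly r (of_nat s))" if "s \<le> n" for s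
  proof -
    obtain d where n: "n = s + d"
      using \<open>s \<le> n\<close> le_Suc_ex by blast
    show ?thesis
      using jacobi_moment_term[of s d p q k]
      by (simp add: n P_def C_def poly_r binomial_fact field_simps)
  qed
  then have "(\<Sum>s\<le>n. ((real n + (real p - 1/2)) gchoose (n - s)) * ((real n + (real q - 1/2)) gchoose s)
            * (-1)^s * hav_moment (s + p) (n - s + k + q)) * P
      = C * (\<Sum>s\<le>n. (-1)^s * of_nat (n choose s) * poly r (of_nat s))"
    unfolding sum_distrib_left sum_distrib_right by (intro sum.cong) auto
  also have "\<dots> = 0"
    using alternating_binomial_sum_poly_eq_0[of r n] deg_r assms by simp
  finally show ?thesis
    using pochhammer_pos[of "real n + real q + 1/2" k] by (simp add: P_def)
qed

definition jacobi_poly :: "nat \<Rightarrow> real \<Rightarrow> real \<Rightarrow> real poly" where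
  "jacobi_poly n a b = (\<Sum>s\<le>n. smult (((real n + a) gchoose (n - s)) * ((real n + b) gchoose s))
       ([:-1/2, 1/2:] ^ s * [:1/2, 1/2:] ^ (n - s)))"

lemma poly_jacobi_poly: "poly (jacobi_poly n a b) x = jacobiP n a b x"
  unfolding jacobi_poly_def jacobiP_def poly_sum
  by (intro sum.cong refl) (simp add: poly_power field_simps)

lemma degree_jacobi_poly: "degree (jacobi_poly n a b) \<le> n"
  unfolding jacobi_poly_def
proof (intro degree_sum_le)
  fix s assume "s \<in> {..n}"
  then have "degree ([:-1/2, 1/2 :: real:] ^ s * [:1/2, 1/2:] ^ (n - s)) \<le> n"
    by (intro order.trans[OF degree_mult_le] order.trans[OF add_mono[OF degree_power_le degree_power_le]])
      auto
  then show "degree (smult (((real n + a) gchoose (n - s)) * ((real n + b) gchoose s))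
      ([:-1/2, 1/2:] ^ s * [:1/2, 1/2:] ^ (n - s))) \<le> n"
    by (rule order.trans[OF degree_smult_le])
qed simp

lemma continuous_on_jacobiP_cos [continuous_intros]:
  "continuous_on S (\<lambda>x. jacobiP n a b (cos x))"
  unfolding jacobiP_def by (intro continuous_intros) auto

lemma jacobiP_cos_havercos_power_integral_eq_0:
  assumes "k < n"
  shows "integral {0..pi} (\<lambda>x. jacobiP n (real p - 1/2) (real q - 1/2) (cos x) * havercos x ^ k
           * (haversin x ^ p * havercos x ^ q)) = 0"
proof -
  define c where "c s = ((real n + (real p - 1/2)) gchoose (n - s))
      * ((real n + (real q - 1/2)) gchoose s) * (-1)^s" for s
  have "jacobiP n (real p - 1/2) (real q - 1/2) (cos x) * havercos x ^ k * (haversin x ^ p * havercos x ^ q)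
      = (\<Sum>s\<le>n. c s * (haversin x ^ (s + p) * havercos x ^ (n - s + k + q)))" for x
  proof -
    have minus: "(cos x - 1) / 2 = - haversin x" and plus: "(cos x + 1) / 2 = havercos x"
      unfolding haversin_def havercos_def by (simp_all add: field_simps)
    show ?thesis
      unfolding jacobiP_def sum_distrib_right c_def minus plus
      by (intro sum.cong refl) (simp only: power_minus[of "haversin x"] power_add mult_ac)
  qed
  then have "integral {0..pi} (\<lambda>x. jacobiP n (real p - 1/2) (real q - 1/2) (cos x) * havercos x ^ k
           * (haversin x ^ p * havercos x ^ q))
      = (\<Sum>s\<le>n. c s * hav_moment (s + p) (n - s + k + q))"
    unfolding hav_moment_def
    by (simp add: integral_sum integral_mult_right integrable_continuous_interval continuous_intros)
  also have "\<dots> = 0"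
    using jacobi_moment_sum_eq_0[OF assms, of p q] by (simp add: c_def)
  finally show ?thesis .
qed

lemma jacobiP_cos_orthogonal:
  assumes "degree Q < n"
  shows "integral {0..pi} (\<lambda>x. jacobiP n (real p - 1/2) (real q - 1/2) (cos x) * poly Q (cos x)
           * (haversin x ^ p * havercos x ^ q)) = 0"
proof -
  define r where "r = Q \<circ>\<^sub>p [:-1, 2:]"
  have "poly [:-1, 2:] (havercos x) = cos x" for x
    by (simp add: havercos_def field_simps)
  then have "poly Q (cos x) = (\<Sum>i\<le>degree r. coeff r i * havercos x ^ i)" for x
    unfolding r_def poly_altdef[symmetric] poly_pcompose by simp
  then have "integral {0..pi} (\<lambda>x. jacobiP n (real p - 1/2) (real q - 1/2) (cos x) * poly Q (cos x)
           * (haversin x ^ p * havercos x ^ q))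
      = (\<Sum>i\<le>degree r. coeff r i * integral {0..pi}
          (\<lambda>x. jacobiP n (real p - 1/2) (real q - 1/2) (cos x) * havercos x ^ i
                * (haversin x ^ p * havercos x ^ q)))"
    by (simp add: sum_distrib_left sum_distrib_right integral_sum integral_mult_right mult_ac
        integrable_continuous_interval continuous_intros)
  also have "\<dots> = 0"
    using assms by (intro sum.neutral ballI)
      (simp add: r_def degree_pcompose jacobiP_cos_havercos_power_integral_eq_0)
  finally show ?thesis .
qed

definition ee_poly :: "nat \<Rightarrow> real poly" where
  "ee_poly n = smult (normN n) (jacobi_poly n (3/2) (3/2))"

lemma ee_eq_poly_ee_poly: "ee n x = poly (ee_poly n) (cos x)"
  by (simp add: ee_poly_def ee_def poly_jacobi_poly)

lemma degree_ee_poly: "degree (ee_poly n) \<le> n"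
  unfolding ee_poly_def using degree_jacobi_poly degree_smult_le order.trans by blast

lemma ee_orthogonal:
  assumes "degree Q < n"
  shows "integral {0..pi} (\<lambda>x. ee n x * poly Q (cos x) * sin x ^ 4) = 0"
proof -
  have "sin x ^ 4 = 16 * (haversin x ^ 2 * havercos x ^ 2)" for x
  proof -
    have "sin x ^ 4 = (sin x ^ 2) ^ 2"
      by (simp flip: power_mult)
    then show ?thesis
      by (simp add: sin_squared_eq_haversin_havercos power_mult_distrib)
  qed
  moreover have "(3/2 :: real) = real 2 - 1/2"
    by simp
  ultimately have "(\<lambda>x. ee n x * poly Q (cos x) * sin x ^ 4) = (\<lambda>x. 16 * normN n *
      (jacobiP n (real 2 - 1/2) (real 2 - 1/2) (cos x) * poly Q (cos x) * (haversin x ^ 2 * havercos x ^ 2)))"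
    by (simp add: ee_def fun_eq_iff)
  then show ?thesis
    using jacobiP_cos_orthogonal[OF assms, of 2 2] by simp
qed

lemma Cbar_eq_0:
  assumes "i + j < m"
  shows "Cbar i j m = 0"
proof -
  have "degree (ee_poly i * ee_poly j) < m"
    using degree_mult_le[of "ee_poly i" "ee_poly j"] degree_ee_poly[of i] degree_ee_poly[of j] assms
    by linarith
  from ee_orthogonal[OF this] show ?thesis
    by (simp add: Cbar_def ee_eq_poly_ee_poly mult_ac)
qed

lemma Cbar_swap: "Cbar i j m = Cbar j i m" "Cbar i j m = Cbar i m j"
  by (simp_all add: Cbar_def mult_ac)

lemma sin_pow_6_eq: "sin (x :: real) ^ 6 = sin x ^ 4 * poly [:1, 0, -1:] (cos x)"
proof -
  have "sin x ^ 6 = sin x ^ 4 * sin x ^ 2"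
    by (simp flip: power_add)
  also have "sin x ^ 2 = poly [:1, 0, -1:] (cos x)"
    using sin_squared_eq[of x] by (simp add: power2_eq_square)
  finally show ?thesis .
qed

lemma C4_eq_0:
  assumes "i + j + k + 2 < m"
  shows "C4 i j k m = 0"
proof -
  have "degree (ee_poly i * ee_poly j * ee_poly k * [:1, 0, -1:]) < m"
    using degree_mult_le[of "ee_poly i * ee_poly j * ee_poly k" "[:1, 0, -1:]"]
      degree_mult_le[of "ee_poly i * ee_poly j" "ee_poly k"] degree_mult_le[of "ee_poly i" "ee_poly j"]
      degree_ee_poly[of i] degree_ee_poly[of j] degree_ee_poly[of k] assms
    by simp
  from ee_orthogonal[OF this] show ?thesis
    unfolding C4_def ee_eq_poly_ee_poly sin_pow_6_eq by (simp only: poly_mult mult_ac)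
qed

lemma C4_swap: "C4 i j k m = C4 j i k m" "C4 i j k m = C4 i k j m" "C4 i j k m = C4 i j m k"
  by (simp_all add: C4_def mult_ac)

theorem lemma5p7:
  fixes i j k m :: nat
  shows "(omega i + omega j - omega m = 0 \<or> omega i - omega j + omega m = 0 \<or>
            - omega i + omega j + omega m = 0 \<longrightarrow> Cbar i j m = 0)
       \<and> (omega i + omega j + omega k - omega m = 0 \<or> omega i + omega j - omega k + omega m = 0 \<or>
            omega i - omega j + omega k + omega m = 0 \<or> - omega i + omega j + omega k + omega m = 0
            \<longrightarrow> C4 i j k m = 0)"
proof (intro conjI impI)
  assume "omega i + omega j - omega m = 0 \<or> omega i - omega j + omega m = 0 \<or>
            - omega i + omega j + omega m = 0"
  then consider "i + j < m" | "i + m < j" | "j + m < i"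
    unfolding omega_def by linarith
  then show "Cbar i j m = 0"
    by cases (metis Cbar_eq_0 Cbar_swap)+
next
  assume "omega i + omega j + omega k - omega m = 0 \<or> omega i + omega j - omega k + omega m = 0 \<or>
            omega i - omega j + omega k + omega m = 0 \<or> - omega i + omega j + omega k + omega m = 0"
  then consider "i + j + k + 2 < m" | "i + j + m + 2 < k" | "i + k + m + 2 < j" | "j + k + m + 2 < i"
    unfolding omega_def by linarith
  then show "C4 i j k m = 0"
    by cases (metis C4_eq_0 C4_swap)+
qed

end
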